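(* (a) For every $\alpha\in K$ and every integer $\ell\ge0$, $$\widetilde I^{(-\ell-1)}_\alpha(\lambda)=\mathrm{rk}(\alpha)\frac{\lambda^{\ell+1}}{(\ell+1)!}\phi_{0,0}+\frac{\lambda^\ell}{\ell!}\Big(\frac{1}{n-2}\mathrm{rk}(\alpha)(\log\lambda-C_\ell)+2\pi\mathbf{i}\deg(\alpha)\Big)\phi_{0,1}+\sum_{j=1}^3\sum_{p=1}^{a_j-1}\frac{\lambda^{\ell+1-p/a_j}}{(\ell+1-\frac p{a_j})\cdots(1-\frac p{a_j})}\chi_{j,p}(\alpha)\phi_{j,p},$$ where $C_0:=(n-2)\log Q$ and $C_{\ell+1}=C_\ell+\frac1{\ell+1}$. (b) $\sigma(\alpha)=\alpha\cdot T$ for all $\alpha\in K$, where $T=L_1+L_2+L_3-L-1$ is the class of the tangent bundle of $X$. (c) $\sigma(\epsilon^1_i)=\epsilon^1_{i+1}$ for $1\le i\le n-3$, $\sigma(\epsilon^1_{n-2})=\epsilon^1_1+L-1$, $\sigma(\epsilon^2_1)=-\epsilon^2_1+L-1$, $\sigma(\epsilon^3_1)=-\epsilon^3_1$.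
   Context: Fix an integer $n\ge3$; $a_0=1$, $a_1=n-2$, $a_2=a_3=2$; $X=\mathbb{P}^1_{n-2,2,2}$ (orbifold projective line $[Z/G]$ with $G=\{t\in(\mathbb{C}^* )^3:t_1^{n-2}=t_2^2=t_3^2\}$, $Z=\{z_1^{n-2}+z_2^2+z_3^2=0\}\subset\mathbb{C}^3\setminus\{0\}$). $H$ is its Chen–Ruan cohomology with basis $\phi_{0,0}=1$, $\phi_{0,1}=P$ (hyperplane class), $\phi_{i,p}$ ($1\le i\le3$, $1\le p\le a_i-1$) unit classes of twisted sectors. $\theta(\phi_{i,p})=(\frac12-\frac p{a_i})\phi_{i,p}$, $\rho\phi_{0,0}=\frac1{n-2}\phi_{0,1}$, $\rho$ kills the other basis vectors. $Q\in\mathbb{C}^*$ with a fixed $\log Q$. $K=\mathbb{Z}[L_1,L_2,L_3]/\langle L_i^{a_i}-L_j^{a_j},(L_i-1)(L_j-1):i\neq j\rangle$ (the orbifold $K$-ring of $X$), $L:=L_1^{n-2}$. $\mathrm{rk}$ is the ring map $L_i\mapsto1$; $\deg$ is additive with $\deg(1)=0$, $\deg(L_i)=1/a_i$, $\deg(EF)=\mathrm{rk}(E)\deg(F)+\mathrm{rk}(F)\deg(E)$; $\chi_{j,p}$ is the ring map $K\to\mathbb{C}$ with $\chi_{j,p}(L_i)=e^{-2\pi\mathbf{i}p\delta_{j,i}/a_j}$. Iritani's map $\Psi(E)=\mathrm{rk}(E)(1-\frac{\gamma}{n-2}P)+2\pi\mathbf{i}\deg(E)P+\sum_{j=1}^3\sum_{p=1}^{a_j-1}\Gamma(1-\frac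 p{a_j})\chi_{j,p}(E)\phi_{j,p}$, $\gamma=-\Gamma'(1)+(n-2)\log Q$. For integers $m\le-1$, $\widetilde I^{(m)}(\lambda)=e^{-\rho\partial_\lambda\partial_m}\big(\lambda^{\theta-m-\frac12}/\Gamma(\theta-m+\frac12)\big)$ (operator on $H$; $\partial_m$ differentiates in $m$ as a continuous parameter), extended to all $m\in\mathbb{Z}$ by $\partial_\lambda\widetilde I^{(m)}=\widetilde I^{(m+1)}$; for $\alpha\in K$, $\widetilde I^{(m)}_\alpha(\lambda):=\widetilde I^{(m)}(\lambda)\Psi(\alpha)$ (multivalued in $\lambda$). $\sigma:K\to K$ is the classical monodromy: analytic continuation of $\widetilde I^{(m)}_\alpha(\lambda)$ counterclockwise around $\lambda=0$ equals $\widetilde I^{(m)}_{\sigma(\alpha)}(\lambda)$. Finally $\epsilon^1_i=L_1^i+\frac12(L_2+L_3)-1$ ($1\le i\le n-2$), $\epsilon^2_1=\frac12(L_2+L_3)-1$, $\epsilon^3_1=\frac12(L_2-L_3)$ (in $K\otimes\mathbb{Q}$, $\sigma$ extended linearly). *)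

theory Defs
  imports "HOL-Analysis.Analysis" "HOL-Computational_Algebra.Polynomial" "HOL-Library.Function_Algebras"
begin

(* Elements of K (and K tensor Q) are represented by polynomials in L1,L2,L3:
   complex poly poly poly, innermost variable L1, middle L2, outermost L3.
   K itself = integer-coefficient polynomials modulo the ideal of relations;
   all functions below (rk, deg, chi, Psi, I~) respect that ideal. *)
type_synonym kpoly = "complex poly poly poly"

(* vectors of H: coordinates w.r.t. the basis phi_{i,p}, indexed by (i,p) *)
type_synonym hvec = "nat \<times> nat \<Rightarrow> complex"

definition a :: "nat \<Rightarrow> nat \<Rightarrow> nat" where
  "a n j = (if j = 0 then 1 else if j = 1 then n - 2 else 2)"

definition phi :: "nat \<Rightarrow> nat \<Rightarrow> hvec" where
  "phi i p = (\<lambda>k. if k = (i, p) then 1 else 0)"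

definition scaleH :: "complex \<Rightarrow> hvec \<Rightarrow> hvec" where
  "scaleH c v = (\<lambda>k. c * v k)"

definition ev3 :: "kpoly \<Rightarrow> complex \<Rightarrow> complex \<Rightarrow> complex \<Rightarrow> complex" where
  "ev3 P x1 x2 x3 = poly (map_poly (\<lambda>q. poly (map_poly (\<lambda>r. poly r x1) q) x2) P) x3"

definition L1 :: kpoly where "L1 = [:[:[:0, 1:]:]:]"
definition L2 :: kpoly where "L2 = [:[:0, 1:]:]"
definition L3 :: kpoly where "L3 = [:0, 1:]"
definition cst :: "complex \<Rightarrow> kpoly" where "cst c = [:[:[:c:]:]:]"

definition Lcls :: "nat \<Rightarrow> kpoly" where "Lcls n = L1 ^ (n - 2)"
definition Tcls :: "nat \<Rightarrow> kpoly" where "Tcls n = L1 + L2 + L3 - Lcls n - 1"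

definition Kint :: "kpoly \<Rightarrow> bool" where
  "Kint P \<longleftrightarrow> (\<forall>i j k. coeff (coeff (coeff P i) j) k \<in> \<int>)"

definition rk :: "kpoly \<Rightarrow> complex" where "rk P = ev3 P 1 1 1"

definition d1 :: "kpoly \<Rightarrow> kpoly" where "d1 P = map_poly (map_poly pderiv) P"
definition d2 :: "kpoly \<Rightarrow> kpoly" where "d2 P = map_poly pderiv P"
definition d3 :: "kpoly \<Rightarrow> kpoly" where "d3 P = pderiv P"

(* the unique additive Leibniz map with deg 1 = 0, deg L_i = 1/a_i *)
definition degK :: "nat \<Rightarrow> kpoly \<Rightarrow> complex" where
  "degK n P = rk (d1 P) / of_nat (a n 1) + rk (d2 P) / of_nat (a n 2) + rk (d3 P) / of_nat (a n 3)"

definition chi :: "nat \<Rightarrow> nat \<Rightarrow> nat \<Rightarrow> kpoly \<Rightarrow> complex" where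
  "chi n j p P = (let z = (\<lambda>i. if i = j then exp (- 2 * pi * \<i> * of_nat p / of_nat (a n j)) else 1)
                  in ev3 P (z 1) (z 2) (z 3))"

definition gammaC :: "nat \<Rightarrow> complex \<Rightarrow> complex" where
  "gammaC n logQ = - deriv Gamma 1 + of_nat (n - 2) * logQ"

definition Psi :: "nat \<Rightarrow> complex \<Rightarrow> kpoly \<Rightarrow> hvec" where
  "Psi n logQ E =
     scaleH (rk E) (phi 0 0 - scaleH (gammaC n logQ / of_nat (n - 2)) (phi 0 1))
   + scaleH (2 * pi * \<i> * degK n E) (phi 0 1)
   + (\<Sum>j\<in>{1..3}. \<Sum>p\<in>{1..a n j - 1}.
        scaleH (Gamma (1 - of_nat p / of_nat (a n j)) * chi n j p E) (phi j p))"

definition theta :: "nat \<Rightarrow> nat \<times> nat \<Rightarrow> complex" where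
  "theta n k = 1/2 - of_nat (snd k) / of_nat (a n (fst k))"

definition rho :: "nat \<Rightarrow> hvec \<Rightarrow> hvec" where
  "rho n v = (\<lambda>k. if k = (0, 1) then v (0, 0) / of_nat (n - 2) else 0)"

(* diagonal entry of lambda^(theta - s - 1/2) / Gamma(theta - s + 1/2),
   lambda lifted to the universal cover: u = log lambda *)
definition fdiag :: "nat \<Rightarrow> nat \<times> nat \<Rightarrow> complex \<Rightarrow> complex \<Rightarrow> complex" where
  "fdiag n k s u = exp ((theta n k - s - 1/2) * u) * rGamma (theta n k - s + 1/2)"

(* m <= -1: exp(-rho d_lambda d_m) applied, rho^2 = 0 so the series stops;
   d_lambda = exp(-u) d_u in the coordinate u = log lambda *)
definition Itil_neg :: "nat \<Rightarrow> int \<Rightarrow> hvec \<Rightarrow> complex \<Rightarrow> hvec" where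
  "Itil_neg n m v u =
     (\<lambda>k. fdiag n k (of_int m) u * v k)
   - rho n (\<lambda>k. exp (- u) * deriv (\<lambda>u'. deriv (\<lambda>s. fdiag n k s u') (of_int m)) u * v k)"

definition Dlam :: "(complex \<Rightarrow> hvec) \<Rightarrow> complex \<Rightarrow> hvec" where
  "Dlam F = (\<lambda>u. \<lambda>k. exp (- u) * deriv (\<lambda>u'. F u' k) u)"

definition Itil :: "nat \<Rightarrow> int \<Rightarrow> hvec \<Rightarrow> complex \<Rightarrow> hvec" where
  "Itil n m v = (if m \<le> -1 then Itil_neg n m v
                 else (Dlam ^^ nat (m + 1)) (Itil_neg n (-1) v))"

definition ItilK :: "nat \<Rightarrow> complex \<Rightarrow> int \<Rightarrow> kpoly \<Rightarrow> complex \<Rightarrow> hvec" where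
  "ItilK n logQ m E = Itil n m (Psi n logQ E)"

(* "sigma(E) = F": continuation counterclockwise around 0 (u -> u + 2 pi i)
   of I~^{(m)}_E equals I~^{(m)}_F, for all m *)
definition monodromy :: "nat \<Rightarrow> complex \<Rightarrow> kpoly \<Rightarrow> kpoly \<Rightarrow> bool" where
  "monodromy n logQ E F \<longleftrightarrow>
     (\<forall>m::int. \<forall>u. ItilK n logQ m E (u + 2 * pi * \<i>) = ItilK n logQ m F u)"

definition eps1 :: "nat \<Rightarrow> kpoly" where
  "eps1 i = L1 ^ i + cst (1/2) * (L2 + L3) - 1"
definition eps2 :: kpoly where "eps2 = cst (1/2) * (L2 + L3) - 1"
definition eps3 :: kpoly where "eps3 = cst (1/2) * (L2 - L3)"

fun Cl :: "nat \<Rightarrow> complex \<Rightarrow> nat \<Rightarrow> complex" where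
  "Cl n logQ 0 = of_nat (n - 2) * logQ"
| "Cl n logQ (Suc l) = Cl n logQ l + 1 / of_nat (Suc l)"

end

theory Submission
  imports Defs
begin

(* For m <= -1 the operator I~^(m) is diagonal in the basis phi_{i,p} except for the entry
   phi_{0,0} -> phi_{0,1} contributed by rho (rho^2 = 0), so (a) is a coordinatewise computation
   at s = -l-1: the diagonal factors give 1/(l+1)!, 1/l! and, by
   Gamma(1-r)/Gamma(l+2-r) = 1/(1-r)_{l+1}, the products of the twisted sectors, while the mixed
   derivative d_lambda d_s of the (0,0) entry contributes Digamma(l+1) = C_l - gamma.
   Continuing u = log lambda to u + 2 pi i multiplies the twisted coefficients by exp(-2 pi i p/a_j)
   and adds 2 pi i rk/(n-2) to the coefficient of phi_{0,1}. As rk and the chi_{j,p} are ring maps,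
   deg is a derivation along rk, rk T = 1, deg T = 1/(n-2) and chi_{j,p}(T) = exp(-2 pi i p/a_j),
   this is exactly the effect of replacing alpha by alpha T; the I~^(m) with m >= 0 are
   lambda-derivatives of I~^(-1), which commute with the continuation. This proves (b) for every
   polynomial representative.
   For (c), I~_alpha depends on alpha only through Psi(alpha), i.e. through rk, deg and the
   chi_{j,p}, which are evaluations at (zeta,1,1) with zeta^(n-2) = 1, at (1,-1,1) and at (1,1,-1).
   So it suffices to check that eps T and the claimed image have the same such invariants. *)

locale comm_ring_hom =
  fixes h :: "'a::comm_ring_1 \<Rightarrow> 'b::comm_ring_1"
  assumes hom_add [simp]: "h (x + y) = h x + h y"
    and hom_mult [simp]: "h (x * y) = h x * h y"
    and hom_one [simp]: "h 1 = 1"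
begin

lemma hom_zero [simp]: "h 0 = 0"
  using hom_add[of 0 0] by simp

lemma hom_uminus [simp]: "h (- x) = - h x"
  using hom_add[of x "- x"] by (simp add: add_eq_0_iff)

lemma hom_diff [simp]: "h (x - y) = h x - h y"
  using hom_add[of x "- y"] by simp

lemma hom_power [simp]: "h (x ^ k) = h x ^ k"
  by (induction k) simp_all

lemma hom_of_nat [simp]: "h (of_nat k) = of_nat k"
  by (induction k) simp_all

lemma hom_numeral [simp]: "h (numeral w) = numeral w"
  using hom_of_nat[of "numeral w"] by simp

end

lemma comm_ring_hom_poly: "comm_ring_hom (\<lambda>p. poly p x)"
  by unfold_locales simp_all

lemma comm_ring_hom_map_poly:
  assumes "comm_ring_hom h"
  shows "comm_ring_hom (map_poly h)"
proof -
  interpret comm_ring_hom h by fact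
  have add: "map_poly h (p + q) = map_poly h p + map_poly h q" for p q
    by (intro poly_eqI) (simp add: coeff_map_poly)
  have "map_poly h (p * q) = map_poly h p * map_poly h q" for p q
    by (induction p) (simp_all add: add map_poly_pCons map_poly_smult)
  with add show ?thesis
    by unfold_locales simp_all
qed

lemma comm_ring_hom_comp:
  "comm_ring_hom f \<Longrightarrow> comm_ring_hom g \<Longrightarrow> comm_ring_hom (\<lambda>x. g (f x))"
  by (simp add: comm_ring_hom_def)

lemma comm_ring_hom_ev3: "comm_ring_hom (\<lambda>P. ev3 P x1 x2 x3)"
  unfolding ev3_def
  by (intro comm_ring_hom_comp[OF comm_ring_hom_map_poly comm_ring_hom_poly] comm_ring_hom_poly)

interpretation ev3: comm_ring_hom "\<lambda>P. ev3 P x1 x2 x3" for x1 x2 x3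
  by (rule comm_ring_hom_ev3)

lemma ev3_generators [simp]:
  "ev3 L1 x1 x2 x3 = x1" "ev3 L2 x1 x2 x3 = x2" "ev3 L3 x1 x2 x3 = x3" "ev3 (cst c) x1 x2 x3 = c"
  by (simp_all add: ev3_def L1_def L2_def L3_def cst_def map_poly_pCons)

interpretation rk: comm_ring_hom rk
  unfolding rk_def[abs_def] by (rule comm_ring_hom_ev3)

lemma rk_generators [simp]: "rk L1 = 1" "rk L2 = 1" "rk L3 = 1" "rk (cst c) = c"
  by (simp_all add: rk_def)

interpretation chi: comm_ring_hom "chi n j p" for n j p
  unfolding chi_def[abs_def] Let_def by (rule comm_ring_hom_ev3)

locale derivation =
  fixes D :: "'a::comm_ring_1 \<Rightarrow> 'a"
  assumes derivation_add [simp]: "D (x + y) = D x + D y"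
    and derivation_mult [simp]: "D (x * y) = D x * y + x * D y"
begin

lemma derivation_zero [simp]: "D 0 = 0"
  using derivation_add[of 0 0] by simp

lemma derivation_one [simp]: "D 1 = 0"
  using derivation_mult[of 1 1] by simp

lemma derivation_uminus [simp]: "D (- x) = - D x"
  using derivation_add[of x "- x"] by (simp add: add_eq_0_iff)

lemma derivation_diff [simp]: "D (x - y) = D x - D y"
  using derivation_add[of x "- y"] by simp

lemma derivation_of_nat [simp]: "D (of_nat k) = 0"
  by (induction k) simp_all

lemma derivation_numeral [simp]: "D (numeral w) = 0"
  using derivation_of_nat[of "numeral w"] by simp

end

lemma derivation_pderiv: "derivation pderiv"
  by unfold_locales (simp_all add: pderiv_add pderiv_mult)

lemma derivation_map_poly:
  assumes "derivation D"
  shows "derivation (map_poly D)"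
proof -
  interpret derivation D by fact
  have add: "map_poly D (p + q) = map_poly D p + map_poly D q" for p q
    by (intro poly_eqI) (simp add: coeff_map_poly)
  have smult: "map_poly D (smult c q) = smult (D c) q + smult c (map_poly D q)" for c q
    by (intro poly_eqI) (simp add: coeff_map_poly)
  have "map_poly D (p * q) = map_poly D p * q + p * map_poly D q" for p q
    by (induction p) (simp_all add: add smult map_poly_pCons algebra_simps)
  with add show ?thesis
    by unfold_locales simp_all
qed

interpretation d1: derivation d1
  unfolding d1_def[abs_def] by (intro derivation_map_poly derivation_pderiv)

interpretation d2: derivation d2
  unfolding d2_def[abs_def] by (intro derivation_map_poly derivation_pderiv)

interpretation d3: derivation d3
  unfolding d3_def[abs_def] by (rule derivation_pderiv)

lemma partial_derivatives_generators [simp]: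
  "d1 L1 = 1" "d1 L2 = 0" "d1 L3 = 0" "d1 (cst c) = 0"
  "d2 L1 = 0" "d2 L2 = 1" "d2 L3 = 0" "d2 (cst c) = 0"
  "d3 L1 = 0" "d3 L2 = 0" "d3 L3 = 1" "d3 (cst c) = 0"
  by (simp_all add: d1_def d2_def d3_def L1_def L2_def L3_def cst_def map_poly_pCons pderiv_pCons
      map_poly_1 one_pCons[symmetric])

lemma degK_eq: "degK n P = rk (d1 P) / of_nat (n - 2) + rk (d2 P) / 2 + rk (d3 P) / 2"
  by (simp add: degK_def a_def)

lemma degK_add [simp]: "degK n (P + Q) = degK n P + degK n Q"
  and degK_diff [simp]: "degK n (P - Q) = degK n P - degK n Q"
  and degK_uminus [simp]: "degK n (- P) = - degK n P"
  and degK_mult [simp]: "degK n (P * Q) = degK n P * rk Q + rk P * degK n Q"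
  and degK_one [simp]: "degK n 1 = 0"
  and degK_numeral [simp]: "degK n (numeral w) = 0"
  by (simp_all add: degK_eq add_divide_distrib diff_divide_distrib algebra_simps)

lemma degK_power [simp]: "degK n (P ^ k) = of_nat k * rk P ^ (k - 1) * degK n P"
proof (induction k)
  case (Suc k)
  then show ?case
    by (cases k) (simp_all add: algebra_simps)
qed simp

lemma degK_generators [simp]:
  "degK n L1 = 1 / of_nat (n - 2)" "degK n L2 = 1 / 2" "degK n L3 = 1 / 2" "degK n (cst c) = 0"
  by (simp_all add: degK_eq)

lemma a_simps [simp]: "a n 0 = 1" "a n (Suc 0) = n - 2" "a n 2 = 2" "a n 3 = 2"
  by (simp_all add: a_def)

lemma exp_root_of_unity_power: "exp (- 2 * pi * \<i> * of_nat p / of_nat k) ^ k = 1"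
proof (cases "k = 0")
  case False
  have "exp (- 2 * pi * \<i> * of_nat p / of_nat k) ^ k
      = exp (of_nat k * (- 2 * pi * \<i> * of_nat p / of_nat k))"
    by (rule exp_of_nat_mult[symmetric])
  also have "of_nat k * (- 2 * pi * \<i> * of_nat p / of_nat k) = - (of_nat p * (2 * pi * \<i>))"
    using False by simp
  also have "exp \<dots> = 1"
    by (simp add: exp_minus exp_of_nat_mult)
  finally show ?thesis .
qed simp

lemma rk_Lcls [simp]: "rk (Lcls n) = 1"
  by (simp add: Lcls_def)

lemma ev3_Lcls [simp]: "ev3 (Lcls n) x1 x2 x3 = x1 ^ (n - 2)"
  by (simp add: Lcls_def)

lemma degK_Lcls:
  assumes "n \<ge> 3"
  shows "degK n (Lcls n) = 1"
proof -
  have "(of_nat (n - 2) :: complex) \<noteq> 0"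
    using assms by (simp only: of_nat_eq_0_iff)
  then show ?thesis
    by (simp only: Lcls_def degK_power rk_generators degK_generators power_one mult_1_right
        times_divide_eq_right divide_self_if if_False)
qed

lemma rk_Tcls [simp]: "rk (Tcls n) = 1"
  by (simp add: Tcls_def)

lemma degK_Tcls: "n \<ge> 3 \<Longrightarrow> degK n (Tcls n) = 1 / of_nat (n - 2)"
  by (simp add: Tcls_def degK_Lcls)

lemma chi_Tcls:
  assumes "j \<in> {1..3}"
  shows "chi n j p (Tcls n) = exp (- 2 * pi * \<i> * of_nat p / of_nat (a n j))"
proof -
  from assms consider "j = 1" | "j = 2" | "j = 3"
    by fastforce
  then show ?thesis
    using exp_root_of_unity_power[of p "n - 2"] by cases (simp_all add: chi_def Tcls_def Lcls_def)
qed

lemma sum_fun_apply: "(\<Sum>x\<in>A. f x) y = (\<Sum>x\<in>A. f x y)"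
  by (induction A rule: infinite_finite_induct) auto

lemma scaleH_phi_apply [simp]: "scaleH c (phi j p) k = (if k = (j, p) then c else 0)"
  by (simp add: scaleH_def phi_def)

lemma hvec_expansion_apply:
  "(scaleH c00 (phi 0 0) + scaleH c01 (phi 0 1)
      + (\<Sum>j\<in>{1..3}. \<Sum>p\<in>{1..a n j - 1}. scaleH (c j p) (phi j p))) (i, q)
   = (if (i, q) = (0, 0) then c00 else if (i, q) = (0, 1) then c01
      else if i \<in> {1..3} \<and> q \<in> {1..a n i - 1} then c i q else 0)"
proof -
  have inner: "(\<Sum>p\<in>P. scaleH (c j p) (phi j p) (i, q))
      = (if j = i then if q \<in> P then c j q else 0 else 0)"
    if "finite P" for j P
    using that by (cases "j = i") (simp_all add: sum.delta')
  have "(\<Sum>j\<in>{1..3}. \<Sum>p\<in>{1..a n j - 1}. scaleH (c j p) (phi j p)) (i, q)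
      = (if i \<in> {1..3} \<and> q \<in> {1..a n i - 1} then c i q else 0)"
    by (simp add: sum_fun_apply inner sum.delta' del: scaleH_phi_apply cong: if_cong)
  then show ?thesis
    by (auto simp: scaleH_def phi_def)
qed

lemma Psi_eq_expansion:
  "Psi n logQ E = scaleH (rk E) (phi 0 0)
     + scaleH (2 * pi * \<i> * degK n E - rk E * gammaC n logQ / of_nat (n - 2)) (phi 0 1)
     + (\<Sum>j\<in>{1..3}. \<Sum>p\<in>{1..a n j - 1}.
          scaleH (Gamma (1 - of_nat p / of_nat (a n j)) * chi n j p E) (phi j p))"
  by (simp add: Psi_def scaleH_def phi_def fun_eq_iff algebra_simps)

lemma Psi_apply:
  "Psi n logQ E (i, q) =
     (if (i, q) = (0, 0) then rk E
      else if (i, q) = (0, 1) then 2 * pi * \<i> * degK n E - rk E * gammaC n logQ / of_nat (n - 2)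
      else if i \<in> {1..3} \<and> q \<in> {1..a n i - 1}
      then Gamma (1 - of_nat q / of_nat (a n i)) * chi n i q E else 0)"
  unfolding Psi_eq_expansion by (rule hvec_expansion_apply)

lemma of_nat_plus_1_neq_0 [simp]: "(of_nat l + 1 :: 'a::semiring_char_0) \<noteq> 0"
  by (metis of_nat_Suc of_nat_neq_0 add.commute)

lemma rGamma_of_nat_plus_1: "rGamma (of_nat l + 1 :: complex) = 1 / fact l"
  using Gamma_fact[of l] by (simp add: rGamma_inverse_Gamma divide_inverse add.commute)

lemma Cl_eq_Digamma: "Cl n logQ l = gammaC n logQ + Digamma (of_nat l + 1)"
proof (induction l)
  case 0
  have "deriv Gamma (1 :: complex) = - euler_mascheroni"
    using DERIV_imp_deriv[OF has_field_derivative_Gamma[of 1]] by simp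
  then show ?case
    by (simp add: gammaC_def)
next
  case (Suc l)
  have "Digamma (of_nat l + 1 + 1 :: complex) = Digamma (of_nat l + 1) + 1 / (of_nat l + 1)"
    by (rule Digamma_plus1) simp
  with Suc show ?case
    by (simp add: algebra_simps)
qed

lemma pochhammer_one_minus_eq_prod:
  fixes z :: "'a::comm_ring_1"
  shows "pochhammer (1 - z) N = (\<Prod>k\<in>{1..N}. of_nat k - z)"
  by (induction N) (simp_all add: pochhammer_rec' prod.cl_ivl_Suc algebra_simps)

lemma Gamma_mult_rGamma_shift:
  fixes z :: complex
  assumes "1 - z \<notin> \<int>\<^sub>\<le>\<^sub>0"
  shows "Gamma (1 - z) * rGamma (of_nat N + 1 - z) = 1 / (\<Prod>k\<in>{1..N}. of_nat k - z)"
proof -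
  have "Gamma (of_nat N + 1 - z) = Gamma (1 - z) * (\<Prod>k\<in>{1..N}. of_nat k - z)"
    using pochhammer_Gamma[OF assms, of N] Gamma_nonzero[OF assms]
    by (simp add: pochhammer_one_minus_eq_prod field_simps)
  then show ?thesis
    using Gamma_nonzero[OF assms] by (simp add: rGamma_inverse_Gamma field_simps)
qed

lemma Itil_neg_apply:
  "Itil_neg n m v u k = fdiag n k (of_int m) u * v k
     - (if k = (0, 1)
        then exp (- u) * deriv (\<lambda>u'. deriv (\<lambda>s. fdiag n (0, 0) s u') (of_int m)) u
          * v (0, 0) / of_nat (n - 2)
        else 0)"
  by (simp add: Itil_neg_def rho_def)

lemma fdiag_at_negative:
  "fdiag n (i, q) (- of_nat l - 1) u
     = exp ((of_nat l + 1 - of_nat q / of_nat (a n i)) * u)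
       * rGamma (of_nat l + 2 - of_nat q / of_nat (a n i))"
  by (simp add: fdiag_def theta_def algebra_simps)

lemma fdiag_00: "fdiag n (0, 0) s u = exp (- s * u) * rGamma (1 - s)"
  by (simp add: fdiag_def theta_def)

lemma mixed_derivative_fdiag_00:
  "exp (- u) * deriv (\<lambda>u'. deriv (\<lambda>s. fdiag n (0, 0) s u') (- of_nat l - 1)) u
     = exp (of_nat l * u) / fact l * (Digamma (of_nat l + 1) - u)"
proof -
  define N :: complex where "N = of_nat l + 1"
  have N_nz: "N \<noteq> 0"
    by (simp add: N_def)
  have rGamma_deriv:
    "((\<lambda>s. rGamma (1 - s)) has_field_derivative rGamma (N + 1) * Digamma (N + 1)) (at (- N))"
  proof -
    have "N + 1 = of_nat (Suc (Suc l))"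
      by (simp add: N_def)
    then have "N + 1 \<notin> \<int>\<^sub>\<le>\<^sub>0"
      by (simp only: of_nat_in_nonpos_Ints_iff)
    then have "(rGamma has_field_derivative - rGamma (N + 1) * Digamma (N + 1)) (at (1 - (- N)))"
      using has_field_derivative_rGamma_no_nonpos_int[of "N + 1" UNIV] by (simp add: add.commute)
    moreover have "((\<lambda>s. 1 - s) has_field_derivative - 1) (at (- N))"
      by (auto intro!: derivative_eq_intros)
    ultimately show ?thesis
      using DERIV_chain2 by fastforce
  qed
  have inner: "deriv (\<lambda>s. fdiag n (0, 0) s u') (- N)
      = exp (N * u') * rGamma (N + 1) * (Digamma (N + 1) - u')" for u'
  proof -
    have "((\<lambda>s. exp (- s * u') * rGamma (1 - s)) has_field_derivative
            exp (N * u') * rGamma (N + 1) * (Digamma (N + 1) - u')) (at (- N))"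
      by (rule derivative_eq_intros rGamma_deriv refl | simp add: algebra_simps)+
    then show ?thesis
      by (intro DERIV_imp_deriv) (simp add: fdiag_00)
  qed
  have outer: "deriv (\<lambda>u'. exp (N * u') * rGamma (N + 1) * (Digamma (N + 1) - u')) u
      = exp (N * u) * rGamma (N + 1) * (N * (Digamma (N + 1) - u) - 1)"
    by (intro DERIV_imp_deriv) (auto intro!: derivative_eq_intros simp: algebra_simps)
  have point: "- of_nat l - 1 = - N"
    by (simp add: N_def)
  have "exp (- u) * deriv (\<lambda>u'. deriv (\<lambda>s. fdiag n (0, 0) s u') (- of_nat l - 1)) u
      = exp (- u) * exp (N * u) * rGamma (N + 1) * (N * (Digamma (N + 1) - u) - 1)"
    unfolding point inner outer by (simp only: mult.assoc)
  also have "exp (- u) * exp (N * u) = exp (of_nat l * u)"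
    by (simp add: N_def exp_add[symmetric] algebra_simps)
  also have "rGamma (N + 1) = 1 / (N * fact l)"
    using rGamma_of_nat_plus_1[of "Suc l"] by (simp add: N_def add.commute)
  also have "Digamma (N + 1) = Digamma (of_nat l + 1) + 1 / N"
    using Digamma_plus1[OF N_nz] by (simp add: N_def)
  also have "exp (of_nat l * u) * (1 / (N * fact l))
        * (N * (Digamma (of_nat l + 1) + 1 / N - u) - 1)
      = exp (of_nat l * u) / fact l * (Digamma (of_nat l + 1) - u)"
    using N_nz by (simp add: field_simps)
  finally show ?thesis .
qed

lemma ItilK_negative_apply:
  "ItilK n logQ (- int l - 1) E u (i, q) =
     (if (i, q) = (0, 0) then rk E * exp (of_nat (l + 1) * u) / of_nat (fact (l + 1))
      else if (i, q) = (0, 1) then exp (of_nat l * u) / of_nat (fact l) *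
        (rk E * (u - Cl n logQ l) / of_nat (n - 2) + 2 * pi * \<i> * degK n E)
      else if i \<in> {1..3} \<and> q \<in> {1..a n i - 1} then
        exp ((of_nat (l + 1) - of_nat q / of_nat (a n i)) * u)
          / (\<Prod>k\<in>{1..l + 1}. (of_nat k - of_nat q / of_nat (a n i))) * chi n i q E
      else 0)"
proof -
  have lhs: "ItilK n logQ (- int l - 1) E u (i, q)
      = fdiag n (i, q) (- of_nat l - 1) u * Psi n logQ E (i, q)
        - (if (i, q) = (0, 1) then exp (of_nat l * u) / fact l * (Digamma (of_nat l + 1) - u)
             * rk E / of_nat (n - 2) else 0)"
    by (simp add: ItilK_def Itil_def Itil_neg_apply mixed_derivative_fdiag_00 Psi_apply)
  consider "(i, q) = (0, 0)" | "(i, q) = (0, 1)" | "i \<in> {1..3}" "q \<in> {1..a n i - 1}"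
    | "(i, q) \<noteq> (0, 0)" "(i, q) \<noteq> (0, 1)" "\<not> (i \<in> {1..3} \<and> q \<in> {1..a n i - 1})"
    by blast
  then show ?thesis
  proof cases
    case 1
    then show ?thesis
      using lhs rGamma_of_nat_plus_1[of "Suc l"]
      by (simp add: Psi_apply fdiag_at_negative algebra_simps)
  next
    case 2
    then have "i = 0" "q = 1"
      by simp_all
    moreover have "fdiag n (0, 1) (- of_nat l - 1) u = exp (of_nat l * u) / fact l"
      using rGamma_of_nat_plus_1[of l] by (simp add: fdiag_at_negative algebra_simps)
    ultimately show ?thesis
      using lhs by (simp add: Psi_apply Cl_eq_Digamma divide_inverse algebra_simps)
  next
    case 3
    define r :: real where "r = q / a n i"
    have "q < a n i"
      using 3 by auto
    then have "r < 1"
      by (simp add: r_def)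
    then have "1 - of_real r \<notin> (\<int>\<^sub>\<le>\<^sub>0 :: complex set)"
      by (metis of_real_1 of_real_diff of_real_in_nonpos_Ints_iff nonpos_Ints_nonpos
          diff_gt_0_iff_gt not_le)
    moreover have "of_nat q / of_nat (a n i) = (of_real r :: complex)"
      by (simp add: r_def)
    ultimately show ?thesis
      using 3 lhs Gamma_mult_rGamma_shift[of "of_real r" "l + 1"]
      by (simp add: Psi_apply fdiag_at_negative algebra_simps) (simp add: mult.assoc[symmetric])
  next
    case 4
    then show ?thesis
      using lhs by (auto simp: Psi_apply)
  qed
qed

lemma ItilK_negative:
  "ItilK n logQ (- int l - 1) E u =
     scaleH (rk E * exp (of_nat (l + 1) * u) / of_nat (fact (l + 1))) (phi 0 0)
   + scaleH (exp (of_nat l * u) / of_nat (fact l) *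
        (rk E * (u - Cl n logQ l) / of_nat (n - 2) + 2 * pi * \<i> * degK n E)) (phi 0 1)
   + (\<Sum>j\<in>{1..3}. \<Sum>p\<in>{1..a n j - 1}.
        scaleH (exp ((of_nat (l + 1) - of_nat p / of_nat (a n j)) * u)
                / (\<Prod>k\<in>{1..l + 1}. (of_nat k - of_nat p / of_nat (a n j)))
                * chi n j p E) (phi j p))"
  by (rule ext, clarify) (simp only: ItilK_negative_apply hvec_expansion_apply)

lemma Dlam_shift:
  assumes "exp c = 1" and "\<And>u. F (u + c) = G u"
  shows "Dlam F (u + c) = Dlam G u"
proof -
  have "deriv (\<lambda>u'. F u' k) (u + c) = deriv (\<lambda>u'. F (u' + c) k) u" for k
    by (simp add: deriv_def DERIV_shift)
  moreover have "exp (- (u + c)) = exp (- u)"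
    using assms(1) by (simp add: exp_diff)
  ultimately show ?thesis
    by (simp add: Dlam_def assms(2))
qed

lemma Dlam_funpow_shift:
  assumes "exp c = 1" and "\<And>u. F (u + c) = G u"
  shows "(Dlam ^^ k) F (u + c) = (Dlam ^^ k) G u"
  using assms(2) by (induction k arbitrary: u) (simp_all add: Dlam_shift[OF assms(1)])

lemma monodromyI_negative:
  assumes "\<And>l u. ItilK n logQ (- int l - 1) E (u + 2 * pi * \<i>)
    = ItilK n logQ (- int l - 1) F u"
  shows "monodromy n logQ E F"
  unfolding monodromy_def
proof (intro allI)
  fix m :: int and u
  show "ItilK n logQ m E (u + 2 * pi * \<i>) = ItilK n logQ m F u"
  proof (cases "m \<le> -1")
    case True
    then have "m = - int (nat (- m - 1)) - 1"
      by simp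
    then show ?thesis
      using assms by metis
  next
    case False
    have "Itil_neg n (- 1) (Psi n logQ E) (u + 2 * pi * \<i>) = Itil_neg n (- 1) (Psi n logQ F) u"
      for u
      using assms[of 0 u] by (simp add: ItilK_def Itil_def)
    then have "(Dlam ^^ nat (m + 1)) (Itil_neg n (- 1) (Psi n logQ E)) (u + 2 * pi * \<i>)
        = (Dlam ^^ nat (m + 1)) (Itil_neg n (- 1) (Psi n logQ F)) u"
      by (intro Dlam_funpow_shift) simp_all
    with False show ?thesis
      by (simp add: ItilK_def Itil_def)
  qed
qed

lemma exp_mult_shift_2pi:
  "exp ((of_nat k - z) * (u + 2 * pi * \<i>))
     = exp ((of_nat k - z) * u) * exp (- 2 * pi * \<i> * z)"
proof -
  have "(of_nat k - z) * (u + 2 * pi * \<i>)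
      = (of_nat k - z) * u + (of_nat k * (2 * pi * \<i>) + - 2 * pi * \<i> * z)"
    by (simp add: algebra_simps)
  then show ?thesis
    by (simp only: exp_add exp_of_nat_mult) simp
qed

lemma monodromy_criterion:
  assumes rk: "rk F = rk E"
    and deg: "degK n F = degK n E + rk E / of_nat (n - 2)"
    and chi: "\<And>j p. j \<in> {1..3} \<Longrightarrow> p \<in> {1..a n j - 1} \<Longrightarrow>
      chi n j p F = exp (- 2 * pi * \<i> * of_nat p / of_nat (a n j)) * chi n j p E"
  shows "monodromy n logQ E F"
proof (rule monodromyI_negative, rule ext, clarify)
  fix l u i q
  have shift_00: "exp (of_nat (l + 1) * (u + 2 * pi * \<i>)) = exp (of_nat (l + 1) * u)"
    and shift_01: "exp (of_nat l * (u + 2 * pi * \<i>)) = exp (of_nat l * u)"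
    using exp_mult_shift_2pi[of "l + 1" 0 u] exp_mult_shift_2pi[of l 0 u] by simp_all
  have coeff_01:
    "rk E * (u + 2 * pi * \<i> - Cl n logQ l) / of_nat (n - 2) + 2 * pi * \<i> * degK n E
      = rk F * (u - Cl n logQ l) / of_nat (n - 2) + 2 * pi * \<i> * degK n F"
    by (simp add: rk deg algebra_simps add_divide_distrib diff_divide_distrib)
  show "ItilK n logQ (- int l - 1) E (u + 2 * pi * \<i>) (i, q)
    = ItilK n logQ (- int l - 1) F u (i, q)"
    unfolding ItilK_negative_apply exp_mult_shift_2pi shift_00 shift_01 coeff_01
    by (auto simp: rk chi)
qed

theorem monodromy_mult_Tcls:
  assumes "n \<ge> 3"
  shows "monodromy n logQ E (E * Tcls n)"
  by (rule monodromy_criterion) (simp_all add: degK_Tcls[OF assms] chi_Tcls)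

lemma monodromy_Psi_cong:
  "monodromy n logQ E F \<Longrightarrow> Psi n logQ F = Psi n logQ G \<Longrightarrow> monodromy n logQ E G"
  by (simp add: monodromy_def ItilK_def)

lemma Psi_eqI:
  assumes "rk E = rk F" "degK n E = degK n F"
    and "\<And>\<zeta>. \<zeta> ^ (n - 2) = 1 \<Longrightarrow> ev3 E \<zeta> 1 1 = ev3 F \<zeta> 1 1"
    and "ev3 E 1 (- 1) 1 = ev3 F 1 (- 1) 1" "ev3 E 1 1 (- 1) = ev3 F 1 1 (- 1)"
  shows "Psi n logQ E = Psi n logQ F"
proof -
  have "chi n j p E = chi n j p F" if "j \<in> {1..3}" "p \<in> {1..a n j - 1}" for j p
  proof -
    have "j = 1 \<or> j = 2 \<and> p = 1 \<or> j = 3 \<and> p = 1"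
      using that by (auto simp: a_def)
    then consider "j = 1" | "j = 2" "p = 1" | "j = 3" "p = 1"
      by blast
    then show ?thesis
      using assms(3)[OF exp_root_of_unity_power[of p "n - 2"]]
      by cases (simp_all add: chi_def assms(4,5) exp_minus)
  qed
  then show ?thesis
    unfolding Psi_def using assms(1,2) by (intro arg_cong2[where f = "(+)"] sum.cong refl) simp_all
qed

lemma monodromy_via_Tcls:
  assumes "n \<ge> 3"
    and "rk (E * Tcls n) = rk F" "degK n (E * Tcls n) = degK n F"
    and "\<And>\<zeta>. \<zeta> ^ (n - 2) = 1 \<Longrightarrow> ev3 (E * Tcls n) \<zeta> 1 1 = ev3 F \<zeta> 1 1"
    and "ev3 (E * Tcls n) 1 (- 1) 1 = ev3 F 1 (- 1) 1"
    and "ev3 (E * Tcls n) 1 1 (- 1) = ev3 F 1 1 (- 1)"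
  shows "monodromy n logQ E F"
  using monodromy_mult_Tcls[OF assms(1)] Psi_eqI[OF assms(2-)] by (rule monodromy_Psi_cong)

theorem proposition4:
  fixes n :: nat and logQ :: complex
  assumes "n \<ge> 3"
  shows "(\<forall>\<alpha> (l::nat) (u::complex). Kint \<alpha> \<longrightarrow>
            ItilK n logQ (- int l - 1) \<alpha> u =
              scaleH (rk \<alpha> * exp (of_nat (l + 1) * u) / of_nat (fact (l + 1))) (phi 0 0)
            + scaleH (exp (of_nat l * u) / of_nat (fact l) *
                 (rk \<alpha> * (u - Cl n logQ l) / of_nat (n - 2) + 2 * pi * \<i> * degK n \<alpha>)) (phi 0 1)
            + (\<Sum>j\<in>{1..3}. \<Sum>p\<in>{1..a n j - 1}.
                 scaleH (exp ((of_nat (l + 1) - of_nat p / of_nat (a n j)) * u)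
                         / (\<Prod>k\<in>{1..l + 1}. (of_nat k - of_nat p / of_nat (a n j)))
                         * chi n j p \<alpha>) (phi j p)))
       \<and> (\<forall>\<alpha>. Kint \<alpha> \<longrightarrow> monodromy n logQ \<alpha> (\<alpha> * Tcls n))
       \<and> (\<forall>i\<in>{1..n - 3}. monodromy n logQ (eps1 i) (eps1 (i + 1)))
       \<and> monodromy n logQ (eps1 (n - 2)) (eps1 1 + Lcls n - 1)
       \<and> monodromy n logQ eps2 (- eps2 + Lcls n - 1)
       \<and> monodromy n logQ eps3 (- eps3)"
proof (intro conjI allI impI ballI ItilK_negative)
  show "monodromy n logQ \<alpha> (\<alpha> * Tcls n)" for \<alpha>
    using assms by (rule monodromy_mult_Tcls)
  show "monodromy n logQ (eps1 i) (eps1 (i + 1))" for i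
    using assms by (rule monodromy_via_Tcls)
      (simp_all add: eps1_def Tcls_def degK_Lcls[OF assms] add_divide_distrib)
  show "monodromy n logQ (eps1 (n - 2)) (eps1 1 + Lcls n - 1)"
    using assms by (rule monodromy_via_Tcls)
      (simp_all add: eps1_def Tcls_def Lcls_def[symmetric] degK_Lcls[OF assms])
  show "monodromy n logQ eps2 (- eps2 + Lcls n - 1)"
    using assms by (rule monodromy_via_Tcls) (simp_all add: eps2_def Tcls_def degK_Lcls[OF assms])
  show "monodromy n logQ eps3 (- eps3)"
    using assms by (rule monodromy_via_Tcls) (simp_all add: eps3_def Tcls_def)
qed

end
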